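(* Let $B$ be a Batanin tree and $A$ a full $(n-1)$-sphere of $T\mathrm{Pos}(B)$ such that $\dim B<n$. Then for every weak $\omega$-category $\mathbb X=(X,\alpha)$ and every morphism of globular sets $f\colon\mathrm{Pos}(B)\to X$, the coherence cell $\mathrm{coh}^{\mathbb X}(B,A,f)$ is invertible.
   Context: Batanin trees are generated inductively: for every finite list $B_1,\dots,B_n$ ($n\ge0$) of Batanin trees there is a tree $[B_1,\dots,B_n]$; $\dim[B_1,\dots,B_n]=\max_i(\dim B_i+1)$ (and $\dim[\,]=0$). The suspension $\Sigma Y$ of a globular set has $0$-cells $v_-,v_+$ and $(\Sigma Y)_{n+1}=Y_n$, every $1$-cell going from $v_-$ to $v_+$. $\mathrm{Pos}([B_1,\dots,B_n])=\Sigma\mathrm{Pos}(B_1)\vee\cdots\vee\Sigma\mathrm{Pos}(B_n)$, the wedge gluing $v_+$ of each summand to $v_-$ of the next (a single point if $n=0$). Boundary trees: $\partial_0B=[\,]$, $\partial_{k+1}[B_1,\dots,B_n]=[\partial_kB_1,\dots,\partial_kB_n]$, with cosource/cotarget inclusions $s^B_k,t^B_k\colon\mathrm{Pos}(\partial_kB)\to\mathrm{Pos}(B)$ ($s^B_0$ picks the leftmost $0$-position, $t^B_0$ the rightmost, $s^B_{k+1}=\bigvee_i\Sigma s^{B_i}_k$, $t^B_{k+1}=\bigvee_i\Sigma t^{B_i}_k$). $T$ is the free weak $\omega$-category monad on globular sets (Batanin–Leinster), in the computad presentation of Dean et al.: for a globular set $Y$, the $n$-cells of $TY$ are generated by $\mathrm{var}\,y$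 ($y\in Y_n$) and $\mathrm{coh}(B,A,f)$ for a tree $B$ with $\dim B\le n$, a full $(n-1)$-sphere $A$ of $T\mathrm{Pos}(B)$ and a globular map $f\colon\mathrm{Pos}(B)\to TY$; the boundary of $\mathrm{coh}(B,A,f)$ is $A$ with $f$ substituted. An $m$-sphere is a pair of parallel $m$-cells (the unique $(-1)$-sphere is full). A cell of $T\mathrm{Pos}(P)$ covers $P$ if every position of $P$ occurs in it or its iterated boundaries. An $m$-sphere $(u,v)$ of $T\mathrm{Pos}(B)$ is full if $u=T(s^B_m)(u')$, $v=T(t^B_m)(v')$ for $m$-cells $u',v'$ of $T\mathrm{Pos}(\partial_mB)$ covering $\partial_mB$. A weak $\omega$-category is a $T$-algebra $(X,\alpha)$, and $\mathrm{coh}^{\mathbb X}(B,A,f)=\alpha(Tf(\mathrm{coh}(B,A,\mathrm{id})))$ where $\mathrm{id}$ sends each position $p$ to $\mathrm{var}\,p$. It has canonical identities $\mathrm{id}$ and binary compositions $\ast_n$. Invertibility is coinductive: the set $W$ of invertible cells is the largest set of positive-dimensional cells such that every $x\colon u\to v$ in $W$, of dimension $n+1$, admits a cell $\bar x\colon v\to u$ and cells $\eta_x\colon x\ast_n\bar x\to\mathrm{id}(u)$, $\varepsilon_x\colon\bar x\ast_n x\to\mathrm{id}(v)$ in $W$. *)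

theory Defs
  imports Main
begin

datatype tree = Node "tree list"

fun tdim :: "tree \<Rightarrow> nat" where
  "tdim (Node Bs) = Max (insert 0 (set (map (\<lambda>C. Suc (tdim C)) Bs)))"

fun bdry :: "nat \<Rightarrow> tree \<Rightarrow> tree" where
  "bdry 0 B = Node []"
| "bdry (Suc k) (Node Bs) = Node (map (bdry k) Bs)"

text \<open>The 0-positions of Node [B_0,...,B_(n-1)] are PZ 0, ..., PZ n (from left
to right); its (k+1)-positions are PS i p with i < n and p a k-position of B_i (the summand
Sigma Pos(B_i) of the wedge).\<close>
datatype pos = PZ nat | PS nat pos

inductive ispos :: "tree \<Rightarrow> pos \<Rightarrow> bool" where
  "j \<le> length Bs \<Longrightarrow> ispos (Node Bs) (PZ j)"
| "i < length Bs \<Longrightarrow> ispos (Bs ! i) p \<Longrightarrow> ispos (Node Bs) (PS i p)"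

definition poss :: "tree \<Rightarrow> pos set" where
  "poss B = {p. ispos B p}"

fun posdim :: "pos \<Rightarrow> nat" where
  "posdim (PZ j) = 0"
| "posdim (PS i p) = Suc (posdim p)"

fun possrc :: "pos \<Rightarrow> pos" where
  "possrc (PZ j) = PZ j"
| "possrc (PS i (PZ j)) = PZ i"
| "possrc (PS i (PS k q)) = PS i (possrc (PS k q))"

fun postgt :: "pos \<Rightarrow> pos" where
  "postgt (PZ j) = PZ j"
| "postgt (PS i (PZ j)) = PZ (Suc i)"
| "postgt (PS i (PS k q)) = PS i (postgt (PS k q))"

text \<open>Cosource and cotarget inclusions s^B_k, t^B_k : Pos(bdry k B) \<rightarrow> Pos(B).\<close>
fun ssrc :: "nat \<Rightarrow> tree \<Rightarrow> pos \<Rightarrow> pos" where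
  "ssrc 0 B p = PZ 0"
| "ssrc (Suc k) (Node Bs) (PZ j) = PZ j"
| "ssrc (Suc k) (Node Bs) (PS i p) = PS i (ssrc k (Bs ! i) p)"

fun ttgt :: "nat \<Rightarrow> tree \<Rightarrow> pos \<Rightarrow> pos" where
  "ttgt 0 (Node Bs) p = PZ (length Bs)"
| "ttgt (Suc k) (Node Bs) (PZ j) = PZ j"
| "ttgt (Suc k) (Node Bs) (PS i p) = PS i (ttgt k (Bs ! i) p)"

record 'a gset =
  cells :: "nat \<Rightarrow> 'a set"
  src :: "'a \<Rightarrow> 'a"
  tgt :: "'a \<Rightarrow> 'a"

definition globular :: "'a gset \<Rightarrow> bool" where
  "globular G \<longleftrightarrow>
     (\<forall>m n. m \<noteq> n \<longrightarrow> cells G m \<inter> cells G n = {}) \<and>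
     (\<forall>n. \<forall>x\<in>cells G (Suc n). src G x \<in> cells G n \<and> tgt G x \<in> cells G n) \<and>
     (\<forall>n. \<forall>x\<in>cells G (Suc (Suc n)).
        src G (src G x) = src G (tgt G x) \<and> tgt G (src G x) = tgt G (tgt G x))"

definition gmap :: "'a gset \<Rightarrow> 'b gset \<Rightarrow> ('a \<Rightarrow> 'b) \<Rightarrow> bool" where
  "gmap G H f \<longleftrightarrow>
     (\<forall>n. \<forall>x\<in>cells G n. f x \<in> cells H n) \<and>
     (\<forall>n. \<forall>x\<in>cells G (Suc n). f (src G x) = src H (f x) \<and> f (tgt G x) = tgt H (f x))"

definition posG :: "tree \<Rightarrow> pos gset" where
  "posG B = \<lparr>cells = (\<lambda>n. {p \<in> poss B. posdim p = n}), src = possrc, tgt = postgt\<rparr>"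

text \<open>Coh B A g: B the tree, A the sphere (None = the (-1)-sphere, Some (u,v) an m-sphere
of T Pos(B)), g the substitution, a partial map defined exactly on the positions of B.\<close>
datatype ptm = PVar pos | PCoh tree "(ptm \<times> ptm) option" "pos \<Rightarrow> ptm option"

datatype 'a tm = Var 'a | Coh tree "(ptm \<times> ptm) option" "pos \<Rightarrow> 'a tm option"

primrec psubst :: "ptm \<Rightarrow> (pos \<Rightarrow> ptm) \<Rightarrow> ptm" where
  "psubst (PVar p) \<sigma> = \<sigma> p"
| "psubst (PCoh B A g) \<sigma> = PCoh B A (map_option (\<lambda>t. psubst t \<sigma>) \<circ> g)"

definition pmap :: "(pos \<Rightarrow> pos) \<Rightarrow> ptm \<Rightarrow> ptm" where
  "pmap f t = psubst t (\<lambda>p. PVar (f p))"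

fun psrc :: "ptm \<Rightarrow> ptm" where
  "psrc (PVar p) = PVar (possrc p)"
| "psrc (PCoh B (Some (u, v)) g) = psubst u (\<lambda>p. the (g p))"
| "psrc (PCoh B None g) = PCoh B None g"

fun ptgt :: "ptm \<Rightarrow> ptm" where
  "ptgt (PVar p) = PVar (postgt p)"
| "ptgt (PCoh B (Some (u, v)) g) = psubst v (\<lambda>p. the (g p))"
| "ptgt (PCoh B None g) = PCoh B None g"

primrec occ :: "ptm \<Rightarrow> pos set" where
  "occ (PVar p) = {p}"
| "occ (PCoh B A g) = \<Union> (\<Union> (set_option ` range (map_option occ \<circ> g)))"

fun pbdries :: "nat \<Rightarrow> ptm \<Rightarrow> ptm set" where
  "pbdries 0 u = {u}"
| "pbdries (Suc k) u = {u} \<union> pbdries k (psrc u) \<union> pbdries k (ptgt u)"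

definition covers :: "tree \<Rightarrow> nat \<Rightarrow> ptm \<Rightarrow> bool" where
  "covers P m u \<longleftrightarrow> poss P \<subseteq> \<Union> (occ ` pbdries m u)"

text \<open>fullsph W B n A: A is a full (n-1)-sphere of T Pos(B), where W B m t means that t is an
m-cell of T Pos(B).\<close>
definition fullsph :: "(tree \<Rightarrow> nat \<Rightarrow> ptm \<Rightarrow> bool) \<Rightarrow> tree \<Rightarrow> nat \<Rightarrow> (ptm \<times> ptm) option \<Rightarrow> bool" where
  "fullsph W B n A \<longleftrightarrow>
     (n = 0 \<and> A = None) \<or>
     (\<exists>m u v u' v'. n = Suc m \<and> A = Some (u, v) \<and>
        W B m u \<and> W B m v \<and> (0 < m \<longrightarrow> psrc u = psrc v \<and> ptgt u = ptgt v) \<and>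
        W (bdry m B) m u' \<and> W (bdry m B) m v' \<and>
        covers (bdry m B) m u' \<and> covers (bdry m B) m v' \<and>
        u = pmap (ssrc m B) u' \<and> v = pmap (ttgt m B) v')"

lemma fullsph_mono[mono]:
  "(\<And>B m t. W B m t \<longrightarrow> W' B m t) \<Longrightarrow> fullsph W B n A \<longrightarrow> fullsph W' B n A"
  unfolding fullsph_def by blast

text \<open>g is a globular map Pos(B) \<rightarrow> Z, where W m t means t is an m-cell of Z.\<close>
definition pglob :: "(nat \<Rightarrow> 't \<Rightarrow> bool) \<Rightarrow> ('t \<Rightarrow> 't) \<Rightarrow> ('t \<Rightarrow> 't) \<Rightarrow> tree \<Rightarrow> (pos \<Rightarrow> 't option) \<Rightarrow> bool" where
  "pglob W sr tg B g \<longleftrightarrow> dom g = poss B \<and>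
     (\<forall>p\<in>poss B. W (posdim p) (the (g p)) \<and>
        (0 < posdim p \<longrightarrow> sr (the (g p)) = the (g (possrc p)) \<and> tg (the (g p)) = the (g (postgt p))))"

lemma pglob_mono[mono]:
  "(\<And>m t. W m t \<longrightarrow> W' m t) \<Longrightarrow> pglob W sr tg B g \<longrightarrow> pglob W' sr tg B g"
  unfolding pglob_def by blast

text \<open>wfp B n t: t is an n-cell of T Pos(B).\<close>
inductive wfp :: "tree \<Rightarrow> nat \<Rightarrow> ptm \<Rightarrow> bool" where
  wfp_var: "p \<in> poss B \<Longrightarrow> posdim p = n \<Longrightarrow> wfp B n (PVar p)"
| wfp_coh: "tdim B' \<le> n \<Longrightarrow> fullsph wfp B' n A \<Longrightarrow> pglob (wfp B) psrc ptgt B' g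
            \<Longrightarrow> wfp B n (PCoh B' A g)"

abbreviation full_sphere :: "tree \<Rightarrow> nat \<Rightarrow> (ptm \<times> ptm) option \<Rightarrow> bool" where
  "full_sphere B n A \<equiv> fullsph wfp B n A"

primrec psub :: "ptm \<Rightarrow> (pos \<Rightarrow> 'a tm option) \<Rightarrow> 'a tm" where
  "psub (PVar p) g = the (g p)"
| "psub (PCoh B A h) g = Coh B A (map_option (\<lambda>t. psub t g) \<circ> h)"

fun tsrc :: "'a gset \<Rightarrow> 'a tm \<Rightarrow> 'a tm" where
  "tsrc Y (Var y) = Var (src Y y)"
| "tsrc Y (Coh B (Some (u, v)) g) = psub u g"
| "tsrc Y (Coh B None g) = Coh B None g"

fun ttgt_tm :: "'a gset \<Rightarrow> 'a tm \<Rightarrow> 'a tm" where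
  "ttgt_tm Y (Var y) = Var (tgt Y y)"
| "ttgt_tm Y (Coh B (Some (u, v)) g) = psub v g"
| "ttgt_tm Y (Coh B None g) = Coh B None g"

text \<open>wf Y n t: t is an n-cell of T Y.\<close>
inductive wf :: "'a gset \<Rightarrow> nat \<Rightarrow> 'a tm \<Rightarrow> bool" for Y where
  wf_var: "y \<in> cells Y n \<Longrightarrow> wf Y n (Var y)"
| wf_coh: "tdim B \<le> n \<Longrightarrow> full_sphere B n A \<Longrightarrow> pglob (wf Y) (tsrc Y) (ttgt_tm Y) B g
            \<Longrightarrow> wf Y n (Coh B A g)"

definition TG :: "'a gset \<Rightarrow> 'a tm gset" where
  "TG Y = \<lparr>cells = (\<lambda>n. {t. wf Y n t}), src = tsrc Y, tgt = ttgt_tm Y\<rparr>"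

primrec join :: "'a tm tm \<Rightarrow> 'a tm" where
  "join (Var t) = t"
| "join (Coh B A g) = Coh B A (map_option join \<circ> g)"

definition walg :: "'a gset \<Rightarrow> ('a tm \<Rightarrow> 'a) \<Rightarrow> bool" where
  "walg X \<alpha> \<longleftrightarrow> globular X \<and> gmap (TG X) X \<alpha> \<and>
     (\<forall>n. \<forall>x\<in>cells X n. \<alpha> (Var x) = x) \<and>
     (\<forall>n. \<forall>t\<in>cells (TG (TG X)) n. \<alpha> (join t) = \<alpha> (map_tm \<alpha> t))"

definition idsub :: "tree \<Rightarrow> pos \<Rightarrow> pos tm option" where
  "idsub B p = (if p \<in> poss B then Some (Var p) else None)"

text \<open>coh^X(B,A,f) = alpha (T f (coh(B,A,id))).\<close>
definition cohX :: "('a tm \<Rightarrow> 'a) \<Rightarrow> tree \<Rightarrow> (ptm \<times> ptm) option \<Rightarrow> (pos \<Rightarrow> 'a) \<Rightarrow> 'a" where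
  "cohX \<alpha> B A f = \<alpha> (map_tm f (Coh B A (idsub B)))"

text \<open>Disk tree D_n and the tree of two (n+1)-cells composable along an n-cell.\<close>
fun disk :: "nat \<Rightarrow> tree" where
  "disk 0 = Node []"
| "disk (Suc n) = Node [disk n]"

fun comptree :: "nat \<Rightarrow> tree" where
  "comptree 0 = Node [Node [], Node []]"
| "comptree (Suc n) = Node [comptree n]"

fun top :: "nat \<Rightarrow> pos" where
  "top 0 = PZ 0"
| "top (Suc n) = PS 0 (top n)"

fun pinds :: "pos \<Rightarrow> nat list" where
  "pinds (PZ j) = [j]"
| "pinds (PS i p) = i # pinds p"

text \<open>The globular map Pos(D_n) \<rightarrow> X classifying an n-cell x.\<close>
definition diskmap :: "'a gset \<Rightarrow> nat \<Rightarrow> 'a \<Rightarrow> pos \<Rightarrow> 'a" where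
  "diskmap X n x p = (let d = posdim p in
     if d = n then x
     else if last (pinds p) = 0 then (src X ^^ (n - d)) x else (tgt X ^^ (n - d)) x)"

text \<open>The globular map Pos(comptree n) \<rightarrow> X classifying (n+1)-cells x, y with tgt x = src y.\<close>
definition compmap :: "'a gset \<Rightarrow> nat \<Rightarrow> 'a \<Rightarrow> 'a \<Rightarrow> pos \<Rightarrow> 'a" where
  "compmap X n x y p = (let d = posdim p; j = last (pinds p) in
     if d = Suc n then (if pinds p ! n = 0 then x else y)
     else if d = n then (if j = 0 then src X x else if j = 1 then tgt X x else tgt X y)
     else if j = 0 then (src X ^^ (Suc n - d)) x else (tgt X ^^ (Suc n - d)) x)"

definition idc :: "'a gset \<Rightarrow> ('a tm \<Rightarrow> 'a) \<Rightarrow> nat \<Rightarrow> 'a \<Rightarrow> 'a" where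
  "idc X \<alpha> n u = cohX \<alpha> (disk n) (Some (PVar (top n), PVar (top n))) (diskmap X n u)"

text \<open>x *_n y for (n+1)-cells x, y with tgt x = src y (diagrammatic order).\<close>
definition comp :: "'a gset \<Rightarrow> ('a tm \<Rightarrow> 'a) \<Rightarrow> nat \<Rightarrow> 'a \<Rightarrow> 'a \<Rightarrow> 'a" where
  "comp X \<alpha> n x y = cohX \<alpha> (comptree n)
      (Some (PVar (ssrc n (comptree n) (top n)), PVar (ttgt n (comptree n) (top n))))
      (compmap X n x y)"

coinductive invertible :: "'a gset \<Rightarrow> ('a tm \<Rightarrow> 'a) \<Rightarrow> 'a \<Rightarrow> bool" for X \<alpha> where
  "x \<in> cells X (Suc n) \<Longrightarrow> xb \<in> cells X (Suc n) \<Longrightarrow>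
   src X xb = tgt X x \<Longrightarrow> tgt X xb = src X x \<Longrightarrow>
   \<eta> \<in> cells X (Suc (Suc n)) \<Longrightarrow> \<epsilon> \<in> cells X (Suc (Suc n)) \<Longrightarrow>
   src X \<eta> = comp X \<alpha> n x xb \<Longrightarrow> tgt X \<eta> = idc X \<alpha> n (src X x) \<Longrightarrow>
   src X \<epsilon> = comp X \<alpha> n xb x \<Longrightarrow> tgt X \<epsilon> = idc X \<alpha> n (tgt X x) \<Longrightarrow>
   invertible X \<alpha> \<eta> \<Longrightarrow> invertible X \<alpha> \<epsilon> \<Longrightarrow> invertible X \<alpha> x"

end

(*
  Coinduction on the cells coh(B,A,f) with dim B < n, where A is a full (n-1)-sphere.
  Since the tree B then has dimension below n, the cosource and cotarget inclusions of its
  (n-1)-boundary are identities, so A = (a,b) is full exactly when a and b are parallel cells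
  of T Pos(B) that each cover B. Hence (b,a) is full too, and xbar = coh(B,(b,a),f) is the
  candidate inverse of x = coh(B,(a,b),f). The unit is again a coherence cell over B: with
  x' = coh(B,(a,b),id), the sphere (x' *_n xbar', id(a)) in T Pos(B) is full, because the
  composite contains x', which covers B, and id(a) has the covering cell a as its source.
  The algebra laws identify its image under f with (x *_n xbar, id(src x)).
  The same holds for the counit, and both live over B in dimension n + 1 > dim B, so the
  coinduction closes.
*)
theory Submission
  imports Defs
begin

lemma tdim_le_iff: "tdim (Node Bs) \<le> k \<longleftrightarrow> (\<forall>C\<in>set Bs. Suc (tdim C) \<le> k)"
  by (simp add: Max_le_iff)

lemma tdim_singleton: "tdim (Node [C]) = Suc (tdim C)"
  by simp

lemma tdim_eq_0_iff [simp]: "tdim (Node Bs) = 0 \<longleftrightarrow> Bs = []"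
  using tdim_le_iff[of Bs 0] by (cases Bs) auto

declare tdim.simps [simp del]

lemma bdry_eq_self: "tdim B \<le> k \<Longrightarrow> bdry k B = B"
proof (induction k arbitrary: B)
  case 0
  then show ?case by (cases B) (auto simp: tdim_le_iff)
next
  case (Suc k)
  obtain Bs where "B = Node Bs" by (cases B)
  with Suc show ?case by (auto simp: tdim_le_iff intro: map_idI)
qed

lemma ispos_Node_iff:
  "ispos (Node Bs) p \<longleftrightarrow> (\<exists>j. p = PZ j \<and> j \<le> length Bs) \<or>
     (\<exists>i q. p = PS i q \<and> i < length Bs \<and> ispos (Bs ! i) q)"
  by (auto elim: ispos.cases intro: ispos.intros)

lemma ssrc_ttgt_eq_self: "tdim B \<le> k \<Longrightarrow> p \<in> poss B \<Longrightarrow> ssrc k B p = p \<and> ttgt k B p = p"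
proof (induction k arbitrary: B p)
  case 0
  then obtain Bs where "B = Node Bs" by (cases B)
  with 0 show ?case by (auto simp: tdim_le_iff poss_def ispos_Node_iff)
next
  case (Suc k)
  obtain Bs where B: "B = Node Bs" by (cases B)
  show ?case
  proof (cases p)
    case (PS i q)
    with Suc.prems B have "i < length Bs" "q \<in> poss (Bs ! i)" "tdim (Bs ! i) \<le> k"
      by (auto simp: poss_def ispos_Node_iff tdim_le_iff)
    with Suc.IH PS B show ?thesis by simp
  qed (simp add: B)
qed

lemma posdim_possrc [simp]: "posdim (possrc p) = posdim p - 1"
  by (induction p rule: possrc.induct) auto

lemma posdim_postgt [simp]: "posdim (postgt p) = posdim p - 1"
  by (induction p rule: postgt.induct) auto

lemma possrc_postgt_in_poss: "p \<in> poss B \<Longrightarrow> 0 < posdim p \<Longrightarrow> possrc p \<in> poss B \<and> postgt p \<in> poss B"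
  unfolding poss_def mem_Collect_eq
proof (induction rule: ispos.induct)
  case (2 i Bs p)
  then show ?case by (cases p) (auto intro: ispos.intros)
qed simp

lemma possrc_postgt_globular:
  "2 \<le> posdim p \<Longrightarrow> possrc (possrc p) = possrc (postgt p) \<and> postgt (possrc p) = postgt (postgt p)"
proof (induction p rule: possrc.induct)
  case (3 i k q)
  then show ?case by (cases q) auto
qed auto

lemma occ_PCoh_iff [simp]: "p \<in> occ (PCoh B A g) \<longleftrightarrow> (\<exists>q t. g q = Some t \<and> p \<in> occ t)"
  by (auto split: option.splits)

lemma psubst_cong: "(\<And>p. p \<in> occ u \<Longrightarrow> \<sigma> p = \<sigma>' p) \<Longrightarrow> psubst u \<sigma> = psubst u \<sigma>'"
proof (induction u)
  case (PCoh B A g)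
  have "map_option (\<lambda>t. psubst t \<sigma>) (g q) = map_option (\<lambda>t. psubst t \<sigma>') (g q)" for q
  proof (cases "g q")
    case (Some t)
    with PCoh.prems have "psubst t \<sigma> = psubst t \<sigma>'"
      by (intro PCoh.IH(3)[OF rangeI[of g q], of t]) auto
    with Some show ?thesis by simp
  qed simp
  then show ?case by (auto simp: fun_eq_iff)
qed simp

lemma psubst_PVar [simp]: "psubst u PVar = u"
proof (induction u)
  case (PCoh B A g)
  have "map_option (\<lambda>t. psubst t PVar) (g q) = g q" for q
    using PCoh.IH(3)[OF rangeI[of g q]] by (cases "g q") auto
  then show ?case by (auto simp: fun_eq_iff)
qed simp

lemma psubst_psubst: "psubst (psubst u \<sigma>) \<tau> = psubst u (\<lambda>p. psubst (\<sigma> p) \<tau>)"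
proof (induction u)
  case (PCoh B A g)
  have "map_option (\<lambda>t. psubst t \<tau>) (map_option (\<lambda>t. psubst t \<sigma>) (g q)) =
        map_option (\<lambda>t. psubst t (\<lambda>p. psubst (\<sigma> p) \<tau>)) (g q)" for q
    using PCoh.IH(3)[OF rangeI[of g q]] by (cases "g q") auto
  then show ?case by (auto simp: fun_eq_iff)
qed simp

lemma psub_cong: "(\<And>p. p \<in> occ u \<Longrightarrow> F p = F' p) \<Longrightarrow> psub u F = psub u F'"
proof (induction u)
  case (PCoh B A g)
  have "map_option (\<lambda>t. psub t F) (g q) = map_option (\<lambda>t. psub t F') (g q)" for q
  proof (cases "g q")
    case (Some t)
    with PCoh.prems have "psub t F = psub t F'"
      by (intro PCoh.IH(3)[OF rangeI[of g q], of t]) auto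
    with Some show ?thesis by simp
  qed simp
  then show ?case by (auto simp: fun_eq_iff)
qed simp

lemma psub_psubst: "psub (psubst u \<sigma>) F = psub u (\<lambda>p. Some (psub (\<sigma> p) F))"
proof (induction u)
  case (PCoh B A g)
  have "map_option (\<lambda>t. psub t F) (map_option (\<lambda>t. psubst t \<sigma>) (g q)) =
        map_option (\<lambda>t. psub t (\<lambda>p. Some (psub (\<sigma> p) F))) (g q)" for q
    using PCoh.IH(3)[OF rangeI[of g q]] by (cases "g q") auto
  then show ?case by (auto simp: fun_eq_iff)
qed simp

lemma psubst_map_option:
  "occ u \<subseteq> dom h \<Longrightarrow>
   psubst u (\<lambda>p. the (map_option (\<lambda>t. psubst t \<sigma>) (h p))) = psubst (psubst u (\<lambda>p. the (h p))) \<sigma>"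
  unfolding psubst_psubst by (rule psubst_cong) auto

lemma psub_map_option:
  "occ u \<subseteq> dom h \<Longrightarrow> psub u (map_option (\<lambda>t. psub t F) \<circ> h) = psub (psubst u (\<lambda>p. the (h p))) F"
  unfolding psub_psubst by (rule psub_cong) auto

lemma fullsph_conjD: "fullsph (\<lambda>B k t. W B k t \<and> P B k t) B n A \<Longrightarrow> fullsph W B n A"
  by (rule fullsph_mono[THEN mp]) auto

lemma wfp_PVar_iff: "wfp B k (PVar p) \<longleftrightarrow> p \<in> poss B \<and> posdim p = k"
  by (auto elim: wfp.cases intro: wfp.intros)

lemma wfp_PCoh_iff:
  "wfp B k (PCoh B' A g) \<longleftrightarrow> tdim B' \<le> k \<and> full_sphere B' k A \<and> pglob (wfp B) psrc ptgt B' g"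
  by (auto elim: wfp.cases intro: wfp.intros simp: fullsph_conjD)

lemma full_sphere_SucE:
  assumes "fullsph W B (Suc k) A"
  obtains u v where "A = Some (u, v)" "W B k u" "W B k v" "0 < k \<longrightarrow> psrc u = psrc v \<and> ptgt u = ptgt v"
  using assms unfolding fullsph_def by auto

lemma wfp_PCoh_SucE:
  assumes "wfp B (Suc k) (PCoh B' A g)"
  obtains u v where "A = Some (u, v)" "wfp B' k u" "wfp B' k v"
    "0 < k \<longrightarrow> psrc u = psrc v \<and> ptgt u = ptgt v" "pglob (wfp B) psrc ptgt B' g"
  using assms by (auto simp: wfp_PCoh_iff elim: full_sphere_SucE)

lemma pglobD:
  assumes "pglob W sr tg B g" "p \<in> poss B"
  obtains t where "g p = Some t" "W (posdim p) t"
    "0 < posdim p \<Longrightarrow> sr t = the (g (possrc p)) \<and> tg t = the (g (postgt p))"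
proof -
  obtain t where "g p = Some t" using assms by (auto simp: pglob_def)
  with assms that show thesis by (auto simp: pglob_def)
qed

lemma pglob_map_option:
  assumes "pglob W sr tg T h"
    and "\<And>p t. p \<in> poss T \<Longrightarrow> h p = Some t \<Longrightarrow> W (posdim p) t \<Longrightarrow> W' (posdim p) (F t)"
    and "\<And>p t. p \<in> poss T \<Longrightarrow> h p = Some t \<Longrightarrow> W (posdim p) t \<Longrightarrow> 0 < posdim p \<Longrightarrow>
           sr' (F t) = F (sr t) \<and> tg' (F t) = F (tg t)"
  shows "pglob W' sr' tg' T (map_option F \<circ> h)"
  unfolding pglob_def
proof (intro conjI ballI impI)
  show "dom (map_option F \<circ> h) = poss T"
    using assms(1) by (simp add: pglob_def dom_def)
next
  fix p assume p: "p \<in> poss T"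
  obtain t where t: "h p = Some t" "W (posdim p) t"
    and bd: "0 < posdim p \<Longrightarrow> sr t = the (h (possrc p)) \<and> tg t = the (h (postgt p))"
    using pglobD[OF assms(1) p] by blast
  show "W' (posdim p) (the ((map_option F \<circ> h) p))"
    using assms(2)[OF p t] t by simp
  assume d: "0 < posdim p"
  then have "possrc p \<in> dom h" "postgt p \<in> dom h"
    using assms(1) p possrc_postgt_in_poss by (auto simp: pglob_def)
  then show "sr' (the ((map_option F \<circ> h) p)) = the ((map_option F \<circ> h) (possrc p))"
    and "tg' (the ((map_option F \<circ> h) p)) = the ((map_option F \<circ> h) (postgt p))"
    using assms(3)[OF p t d] bd[OF d] t by auto
qed

lemma occ_subset_poss: "wfp B k u \<Longrightarrow> occ u \<subseteq> poss B"
proof (induction rule: wfp.induct)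
  case (wfp_coh B' n A B g)
  show ?case
  proof
    fix p assume "p \<in> occ (PCoh B' A g)"
    then obtain q t where "g q = Some t" "p \<in> occ t" by auto
    with wfp_coh(3) show "p \<in> poss B" unfolding pglob_def by (metis domI option.sel subsetD)
  qed
qed simp

lemma occ_subset_dom: "wfp B' k u \<Longrightarrow> pglob W sr tg B' h \<Longrightarrow> occ u \<subseteq> dom h"
  using occ_subset_poss by (simp add: pglob_def)

lemma psubst_eq_self: "wfp B k u \<Longrightarrow> (\<And>p. p \<in> poss B \<Longrightarrow> \<sigma> p = PVar p) \<Longrightarrow> psubst u \<sigma> = u"
  using psubst_cong[of u \<sigma> PVar] occ_subset_poss by force

lemma psrc_ptgt_psubst:
  assumes "wfp B (Suc k) u" and g: "pglob W psrc ptgt B g"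
  shows "psrc (psubst u (\<lambda>p. the (g p))) = psubst (psrc u) (\<lambda>p. the (g p)) \<and>
         ptgt (psubst u (\<lambda>p. the (g p))) = psubst (ptgt u) (\<lambda>p. the (g p))"
proof (cases u)
  case (PVar p)
  with assms show ?thesis by (auto simp: wfp_PVar_iff pglob_def)
next
  case (PCoh B' A h)
  with assms(1) have "wfp B (Suc k) (PCoh B' A h)" by simp
  then obtain a b where "A = Some (a, b)" "wfp B' k a" "wfp B' k b"
    and "pglob (wfp B) psrc ptgt B' h"
    by (rule wfp_PCoh_SucE)
  with PCoh show ?thesis by (simp add: psubst_map_option occ_subset_dom)
qed

lemma wfp_psubst: "wfp B' k u \<Longrightarrow> pglob (wfp B) psrc ptgt B' g \<Longrightarrow> wfp B k (psubst u (\<lambda>p. the (g p)))"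
proof (induction B' k u arbitrary: B g rule: wfp.induct)
  case (wfp_var p B' n)
  then show ?case by (auto simp: pglob_def)
next
  case (wfp_coh B'' n A B' h)
  have "pglob (wfp B) psrc ptgt B'' (map_option (\<lambda>t. psubst t (\<lambda>p. the (g p))) \<circ> h)"
  proof (rule pglob_map_option[OF wfp_coh(3)])
    fix p t assume "h p = Some t" and t: "wfp B' (posdim p) t \<and>
      (\<forall>B g. pglob (wfp B) psrc ptgt B' g \<longrightarrow> wfp B (posdim p) (psubst t (\<lambda>p. the (g p))))"
    then show "wfp B (posdim p) (psubst t (\<lambda>p. the (g p)))" using wfp_coh.prems by blast
    assume "0 < posdim p"
    then obtain k where "posdim p = Suc k" using gr0_conv_Suc by blast
    with t have "wfp B' (Suc k) t" by simp
    then show "psrc (psubst t (\<lambda>p. the (g p))) = psubst (psrc t) (\<lambda>p. the (g p)) \<and>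
               ptgt (psubst t (\<lambda>p. the (g p))) = psubst (ptgt t) (\<lambda>p. the (g p))"
      by (rule psrc_ptgt_psubst[OF _ wfp_coh.prems])
  qed
  with wfp_coh(1,2) show ?case by (simp add: wfp_PCoh_iff fullsph_conjD)
qed

lemma wfp_psrc_ptgt: "wfp B (Suc k) u \<Longrightarrow> wfp B k (psrc u) \<and> wfp B k (ptgt u)"
proof (cases u)
  case (PVar p)
  then show "wfp B (Suc k) u \<Longrightarrow> ?thesis"
    using possrc_postgt_in_poss[of p B] by (auto simp: wfp_PVar_iff)
next
  case (PCoh B' A g)
  assume "wfp B (Suc k) u"
  with PCoh obtain a b where "A = Some (a, b)" "wfp B' k a" "wfp B' k b"
    and "pglob (wfp B) psrc ptgt B' g"
    by (auto elim: wfp_PCoh_SucE)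
  with PCoh show ?thesis by (simp add: wfp_psubst)
qed

lemma wfp_globular:
  "wfp B (Suc (Suc k)) u \<Longrightarrow> psrc (psrc u) = psrc (ptgt u) \<and> ptgt (psrc u) = ptgt (ptgt u)"
proof (cases u)
  case (PVar p)
  then show "wfp B (Suc (Suc k)) u \<Longrightarrow> ?thesis"
    using possrc_postgt_globular[of p] by (auto simp: wfp_PVar_iff)
next
  case (PCoh B' A g)
  assume "wfp B (Suc (Suc k)) u"
  with PCoh obtain a b where "A = Some (a, b)" "wfp B' (Suc k) a" "wfp B' (Suc k) b"
    "psrc a = psrc b" "ptgt a = ptgt b" and "pglob (wfp B) psrc ptgt B' g"
    by (auto elim: wfp_PCoh_SucE)
  with PCoh show ?thesis by (simp add: psrc_ptgt_psubst)
qed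

lemma wfp_funpow_psrc_ptgt:
  "wfp B m u \<Longrightarrow> k \<le> m \<Longrightarrow> wfp B (m - k) ((psrc ^^ k) u) \<and> wfp B (m - k) ((ptgt ^^ k) u)"
proof (induction k arbitrary: u m)
  case (Suc k)
  then obtain m' where m: "m = Suc m'" "k \<le> m'" by (cases m) auto
  with Suc.prems have "wfp B m' (psrc u)" "wfp B m' (ptgt u)"
    using wfp_psrc_ptgt by auto
  with Suc.IH m show ?case
    by (simp only: funpow_Suc_right o_apply diff_Suc_Suc)
qed simp

lemma wfp_funpow_globular:
  "wfp B m u \<Longrightarrow> k < m \<Longrightarrow>
   psrc ((ptgt ^^ k) u) = (psrc ^^ Suc k) u \<and> ptgt ((psrc ^^ k) u) = (ptgt ^^ Suc k) u"
proof (induction k arbitrary: u m)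
  case (Suc k)
  define m' where "m' = m - 2"
  with Suc.prems have m: "m = Suc (Suc m')" by simp
  with Suc.prems have w: "wfp B (Suc m') (psrc u)" "wfp B (Suc m') (ptgt u)"
    using wfp_psrc_ptgt[of B "Suc m'" u] by simp_all
  from Suc.prems m have g: "psrc (ptgt u) = psrc (psrc u)" "ptgt (psrc u) = ptgt (ptgt u)"
    using wfp_globular[of B m' u] by simp_all
  have "k < Suc m'" using Suc.prems m by simp
  with Suc.IH[OF w(1)] Suc.IH[OF w(2)] g show ?case
    by (simp only: funpow_Suc_right o_apply)
qed simp

section \<open>Full spheres over trees of low dimension\<close>

lemma full_sphere_SucI:
  assumes "wfp B k u" "wfp B k v" "0 < k \<longrightarrow> psrc u = psrc v \<and> ptgt u = ptgt v"
    and "wfp (bdry k B) k u'" "wfp (bdry k B) k v'" "covers (bdry k B) k u'" "covers (bdry k B) k v'"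
    and "u = pmap (ssrc k B) u'" "v = pmap (ttgt k B) v'"
  shows "full_sphere B (Suc k) (Some (u, v))"
  using assms unfolding fullsph_def by blast

lemma full_sphere_Suc_iff:
  assumes "tdim B \<le> k"
  shows "full_sphere B (Suc k) (Some (u, v)) \<longleftrightarrow>
    wfp B k u \<and> wfp B k v \<and> (0 < k \<longrightarrow> psrc u = psrc v \<and> ptgt u = ptgt v) \<and>
    covers B k u \<and> covers B k v"
proof -
  have pmap_eq: "pmap (ssrc k B) w = w \<and> pmap (ttgt k B) w = w" if "wfp B k w" for w
    using that ssrc_ttgt_eq_self[OF assms] unfolding pmap_def by (auto intro: psubst_eq_self)
  note bdry = bdry_eq_self[OF assms]
  show ?thesis
  proof
    assume "full_sphere B (Suc k) (Some (u, v))"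
    then obtain u' v' where "wfp B k u" "wfp B k v" "0 < k \<longrightarrow> psrc u = psrc v \<and> ptgt u = ptgt v"
      "wfp B k u'" "wfp B k v'" "covers B k u'" "covers B k v'"
      "u = pmap (ssrc k B) u'" "v = pmap (ttgt k B) v'"
      by (auto simp: fullsph_def bdry simp del: bdry.simps)
    with pmap_eq show "wfp B k u \<and> wfp B k v \<and> (0 < k \<longrightarrow> psrc u = psrc v \<and> ptgt u = ptgt v) \<and>
      covers B k u \<and> covers B k v" by simp
  next
    assume "wfp B k u \<and> wfp B k v \<and> (0 < k \<longrightarrow> psrc u = psrc v \<and> ptgt u = ptgt v) \<and>
      covers B k u \<and> covers B k v"
    with pmap_eq show "full_sphere B (Suc k) (Some (u, v))"
      by (intro full_sphere_SucI[where u' = u and v' = v]) (simp_all add: bdry)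
  qed
qed

lemma full_sphere_swap:
  "tdim B \<le> n \<Longrightarrow> full_sphere B (Suc n) (Some (a, b)) \<Longrightarrow> full_sphere B (Suc n) (Some (b, a))"
  by (auto simp: full_sphere_Suc_iff)

lemma self_in_pbdries: "u \<in> pbdries k u"
  by (cases k) auto

lemma covers_if_poss_subset_occ: "poss B \<subseteq> occ u \<Longrightarrow> covers B k u"
  unfolding covers_def using self_in_pbdries by blast

lemma covers_Suc_if_covers_psrc: "covers B k (psrc u) \<Longrightarrow> covers B (Suc k) u"
  unfolding covers_def by auto

definition on_poss :: "tree \<Rightarrow> (pos \<Rightarrow> 'b) \<Rightarrow> pos \<Rightarrow> 'b option" where
  "on_poss T \<tau> p = (if p \<in> poss T then Some (\<tau> p) else None)"

lemma pglob_on_possI: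
  assumes "\<And>p. p \<in> poss T \<Longrightarrow> W (posdim p) (\<tau> p)"
    and "\<And>p. p \<in> poss T \<Longrightarrow> 0 < posdim p \<Longrightarrow> sr (\<tau> p) = \<tau> (possrc p) \<and> tg (\<tau> p) = \<tau> (postgt p)"
  shows "pglob W sr tg T (on_poss T \<tau>)"
  unfolding pglob_def
proof (intro conjI ballI impI)
  show "dom (on_poss T \<tau>) = poss T"
    by (auto simp: on_poss_def split: if_splits)
next
  fix p assume p: "p \<in> poss T"
  with assms(1) show "W (posdim p) (the (on_poss T \<tau> p))"
    by (simp add: on_poss_def)
  assume "0 < posdim p"
  with assms(2) p possrc_postgt_in_poss[of p T]
  show "sr (the (on_poss T \<tau> p)) = the (on_poss T \<tau> (possrc p))"
    and "tg (the (on_poss T \<tau> p)) = the (on_poss T \<tau> (postgt p))"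
    by (simp_all add: on_poss_def)
qed

lemma on_poss_cong: "(\<And>p. p \<in> poss T \<Longrightarrow> \<tau> p = \<tau>' p) \<Longrightarrow> on_poss T \<tau> = on_poss T \<tau>'"
  by (auto simp: on_poss_def)

definition pcoh :: "tree \<Rightarrow> (ptm \<times> ptm) option \<Rightarrow> ptm" where
  "pcoh B A = PCoh B A (on_poss B PVar)"

lemma wfp_pcoh: "tdim B \<le> N \<Longrightarrow> full_sphere B N A \<Longrightarrow> wfp B N (pcoh B A)"
  unfolding pcoh_def wfp_PCoh_iff by (auto intro: pglob_on_possI simp: wfp_PVar_iff)

lemma psrc_ptgt_pcoh:
  "wfp B k a \<Longrightarrow> wfp B k b \<Longrightarrow> psrc (pcoh B (Some (a, b))) = a \<and> ptgt (pcoh B (Some (a, b))) = b"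
  by (simp add: pcoh_def psubst_eq_self on_poss_def)

lemma poss_subset_occ_pcoh: "poss B \<subseteq> occ (pcoh B A)"
  by (auto simp: pcoh_def on_poss_def)

lemma gmap_posG_iff:
  "gmap (posG B) X f \<longleftrightarrow> (\<forall>p\<in>poss B. f p \<in> cells X (posdim p) \<and>
     (0 < posdim p \<longrightarrow> f (possrc p) = src X (f p) \<and> f (postgt p) = tgt X (f p)))"
proof -
  have "(\<forall>n. \<forall>p\<in>cells (posG B) (Suc n). P p) \<longleftrightarrow> (\<forall>p\<in>poss B. 0 < posdim p \<longrightarrow> P p)" for P
    by (auto simp: posG_def gr0_conv_Suc)
  then show ?thesis unfolding gmap_def by (auto simp: posG_def)
qed

lemma pglob_on_poss_Var: "gmap (posG B) X f \<Longrightarrow> pglob (wf X) (tsrc X) (ttgt_tm X) B (on_poss B (Var \<circ> f))"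
  by (rule pglob_on_possI) (auto simp: gmap_posG_iff intro: wf_var)

lemma tsrc_ttgt_psub:
  assumes "wfp B (Suc k) u" and G: "pglob W (tsrc X) (ttgt_tm X) B G"
  shows "tsrc X (psub u G) = psub (psrc u) G \<and> ttgt_tm X (psub u G) = psub (ptgt u) G"
proof (cases u)
  case (PVar p)
  with assms show ?thesis by (auto simp: wfp_PVar_iff pglob_def)
next
  case (PCoh B' A h)
  with assms(1) have "wfp B (Suc k) (PCoh B' A h)" by simp
  then obtain a b where "A = Some (a, b)" "wfp B' k a" "wfp B' k b"
    and "pglob (wfp B) psrc ptgt B' h"
    by (rule wfp_PCoh_SucE)
  with PCoh show ?thesis by (simp add: psub_map_option occ_subset_dom)
qed

lemma wf_psub: "wfp B k u \<Longrightarrow> pglob (wf X) (tsrc X) (ttgt_tm X) B G \<Longrightarrow> wf X k (psub u G)"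
proof (induction B k u rule: wfp.induct)
  case (wfp_var p B n)
  then show ?case by (auto simp: pglob_def)
next
  case (wfp_coh B' n A B g)
  have "pglob (wf X) (tsrc X) (ttgt_tm X) B' (map_option (\<lambda>t. psub t G) \<circ> g)"
  proof (rule pglob_map_option[OF wfp_coh(3)])
    fix p t assume "g p = Some t" and t: "wfp B (posdim p) t \<and>
      (pglob (wf X) (tsrc X) (ttgt_tm X) B G \<longrightarrow> wf X (posdim p) (psub t G))"
    then show "wf X (posdim p) (psub t G)" using wfp_coh.prems by blast
    assume "0 < posdim p"
    then obtain k where "posdim p = Suc k" using gr0_conv_Suc by blast
    with t have "wfp B (Suc k) t" by simp
    then show "tsrc X (psub t G) = psub (psrc t) G \<and> ttgt_tm X (psub t G) = psub (ptgt t) G"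
      by (rule tsrc_ttgt_psub[OF _ wfp_coh.prems])
  qed
  with wfp_coh(1,2) show ?case by (auto intro: wf_coh fullsph_conjD)
qed

lemma walg_cells: "walg X \<alpha> \<Longrightarrow> wf X n t \<Longrightarrow> \<alpha> t \<in> cells X n"
  unfolding walg_def gmap_def TG_def by auto

lemma walg_src_tgt: "walg X \<alpha> \<Longrightarrow> wf X (Suc n) t \<Longrightarrow> \<alpha> (tsrc X t) = src X (\<alpha> t) \<and> \<alpha> (ttgt_tm X t) = tgt X (\<alpha> t)"
  unfolding walg_def gmap_def TG_def by auto

lemma walg_join: "walg X \<alpha> \<Longrightarrow> wf (TG X) n t \<Longrightarrow> \<alpha> (join t) = \<alpha> (map_tm \<alpha> t)"
  unfolding walg_def by (auto simp: TG_def)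

lemma alpha_psub_psrc_ptgt:
  assumes "walg X \<alpha>" "pglob (wf X) (tsrc X) (ttgt_tm X) B G" "wfp B (Suc k) u"
  shows "\<alpha> (psub (psrc u) G) = src X (\<alpha> (psub u G)) \<and> \<alpha> (psub (ptgt u) G) = tgt X (\<alpha> (psub u G))"
  using walg_src_tgt[OF assms(1) wf_psub[OF assms(3,2)]] tsrc_ttgt_psub[OF assms(3,2)] by simp

lemma alpha_psub_funpow:
  assumes "walg X \<alpha>" "pglob (wf X) (tsrc X) (ttgt_tm X) B G" "wfp B m u" "k \<le> m"
  shows "\<alpha> (psub ((psrc ^^ k) u) G) = (src X ^^ k) (\<alpha> (psub u G)) \<and>
         \<alpha> (psub ((ptgt ^^ k) u) G) = (tgt X ^^ k) (\<alpha> (psub u G))"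
  using assms(3,4)
proof (induction k arbitrary: u m)
  case (Suc k)
  then obtain m' where m: "m = Suc m'" "k \<le> m'" by (cases m) auto
  with Suc.prems have "wfp B m' (psrc u)" "wfp B m' (ptgt u)"
    using wfp_psrc_ptgt by auto
  with Suc.IH m have "\<alpha> (psub ((psrc ^^ k) (psrc u)) G) = (src X ^^ k) (\<alpha> (psub (psrc u) G))"
    and "\<alpha> (psub ((ptgt ^^ k) (ptgt u)) G) = (tgt X ^^ k) (\<alpha> (psub (ptgt u) G))"
    by blast+
  with alpha_psub_psrc_ptgt[OF assms(1,2)] Suc.prems m show ?case
    by (simp only: funpow_Suc_right o_apply)
qed simp

text \<open>The associativity law of the algebra: evaluating a composite term in one step equals
  evaluating its arguments first.\<close>
lemma alpha_psub_PCoh: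
  assumes alg: "walg X \<alpha>" and G: "pglob (wf X) (tsrc X) (ttgt_tm X) B G"
    and "tdim T \<le> m" "full_sphere T m S" and \<tau>: "pglob (wfp B) psrc ptgt T (on_poss T \<tau>)"
  shows "\<alpha> (psub (PCoh T S (on_poss T \<tau>)) G) = \<alpha> (Coh T S (on_poss T (\<lambda>p. Var (\<alpha> (psub (\<tau> p) G)))))"
proof -
  let ?t = "Coh T S (on_poss T (\<lambda>p. Var (psub (\<tau> p) G)))"
  have \<tau>_wfp: "wfp B (posdim p) (\<tau> p)" if "p \<in> poss T" for p
    using \<tau> that by (auto simp: pglob_def on_poss_def)
  have "pglob (wf (TG X)) (tsrc (TG X)) (ttgt_tm (TG X)) T (on_poss T (\<lambda>p. Var (psub (\<tau> p) G)))"
  proof (rule pglob_on_possI)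
    fix p assume "p \<in> poss T"
    then show "wf (TG X) (posdim p) (Var (psub (\<tau> p) G))"
      using \<tau>_wfp wf_psub[OF _ G] by (auto simp: TG_def intro: wf_var)
    assume "0 < posdim p"
    then obtain k where k: "posdim p = Suc k" using gr0_conv_Suc by blast
    with \<open>p \<in> poss T\<close> have "psrc (\<tau> p) = \<tau> (possrc p)" "ptgt (\<tau> p) = \<tau> (postgt p)"
      using \<tau> possrc_postgt_in_poss[of p T] by (auto simp: pglob_def on_poss_def)
    with tsrc_ttgt_psub[OF _ G] \<tau>_wfp[OF \<open>p \<in> poss T\<close>] k
    show "tsrc (TG X) (Var (psub (\<tau> p) G)) = Var (psub (\<tau> (possrc p)) G) \<and>
          ttgt_tm (TG X) (Var (psub (\<tau> p) G)) = Var (psub (\<tau> (postgt p)) G)"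
      by (simp add: TG_def)
  qed
  with assms(3,4) have "wf (TG X) m ?t" by (auto intro: wf_coh)
  moreover have "join ?t = psub (PCoh T S (on_poss T \<tau>)) G"
    by (simp add: on_poss_def fun_eq_iff)
  moreover have "map_tm \<alpha> ?t = Coh T S (on_poss T (\<lambda>p. Var (\<alpha> (psub (\<tau> p) G))))"
    by (simp add: on_poss_def fun_eq_iff)
  ultimately show ?thesis using walg_join[OF alg] by metis
qed

lemma cohX_eq_alpha_Coh: "cohX \<alpha> B A f = \<alpha> (Coh B A (on_poss B (Var \<circ> f)))"
  unfolding cohX_def by (rule arg_cong[where f = \<alpha>]) (simp add: idsub_def on_poss_def fun_eq_iff)

lemma cohX_eq_alpha_psub_pcoh: "cohX \<alpha> B A f = \<alpha> (psub (pcoh B A) (on_poss B (Var \<circ> f)))"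
  unfolding cohX_eq_alpha_Coh pcoh_def by (rule arg_cong[where f = \<alpha>]) (simp add: on_poss_def fun_eq_iff)

lemma cohX_in_cells:
  assumes "walg X \<alpha>" "gmap (posG B) X f" "tdim B \<le> N" "full_sphere B N A"
  shows "cohX \<alpha> B A f \<in> cells X N"
  unfolding cohX_eq_alpha_psub_pcoh
  using walg_cells[OF assms(1) wf_psub[OF wfp_pcoh[OF assms(3,4)] pglob_on_poss_Var[OF assms(2)]]] .

lemma src_tgt_cohX:
  assumes alg: "walg X \<alpha>" and f: "gmap (posG B) X f" and "tdim B \<le> n" "full_sphere B (Suc n) (Some (a, b))"
  shows "src X (cohX \<alpha> B (Some (a, b)) f) = \<alpha> (psub a (on_poss B (Var \<circ> f))) \<and>
         tgt X (cohX \<alpha> B (Some (a, b)) f) = \<alpha> (psub b (on_poss B (Var \<circ> f)))"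
proof -
  from assms(3,4) have "wfp B (Suc n) (pcoh B (Some (a, b)))" "wfp B n a" "wfp B n b"
    by (simp_all add: wfp_pcoh full_sphere_Suc_iff)
  with alpha_psub_psrc_ptgt[OF alg pglob_on_poss_Var[OF f]] psrc_ptgt_pcoh show ?thesis
    unfolding cohX_eq_alpha_psub_pcoh by metis
qed

section \<open>Disks and composition trees\<close>

definition ps0_pow :: "nat \<Rightarrow> pos \<Rightarrow> pos" where
  "ps0_pow d q = (PS 0 ^^ d) q"

lemma ps0_pow_0 [simp]: "ps0_pow 0 q = q"
  by (simp add: ps0_pow_def)

lemma ps0_pow_Suc: "ps0_pow (Suc d) q = PS 0 (ps0_pow d q)"
  by (simp add: ps0_pow_def)

lemma ps0_pow_Suc_inner: "ps0_pow (Suc d) q = ps0_pow d (PS 0 q)"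
  by (simp add: ps0_pow_def funpow_Suc_right del: funpow.simps)

lemma posdim_ps0_pow [simp]: "posdim (ps0_pow d q) = d + posdim q"
  by (induction d) (auto simp: ps0_pow_Suc)

lemma pinds_ps0_pow [simp]: "pinds (ps0_pow d q) = replicate d 0 @ pinds q"
  by (induction d) (auto simp: ps0_pow_Suc)

lemma top_eq_ps0_pow: "top n = ps0_pow n (PZ 0)"
  by (induction n) (auto simp: ps0_pow_Suc)

lemma possrc_postgt_ps0_pow:
  "0 < posdim q \<Longrightarrow> possrc (ps0_pow d q) = ps0_pow d (possrc q) \<and> postgt (ps0_pow d q) = ps0_pow d (postgt q)"
proof (induction d)
  case (Suc d)
  then show ?case
    using posdim_ps0_pow[of d q] by (cases "ps0_pow d q") (auto simp: ps0_pow_Suc)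
qed simp

lemma possrc_ps0_pow_PZ [simp]: "possrc (ps0_pow (Suc d) (PZ j)) = ps0_pow d (PZ 0)"
  and postgt_ps0_pow_PZ [simp]: "postgt (ps0_pow (Suc d) (PZ j)) = ps0_pow d (PZ 1)"
  using possrc_postgt_ps0_pow[of "PS 0 (PZ j)" d] by (simp_all add: ps0_pow_Suc_inner)

lemma possrc_ps0_pow_PS [simp]: "possrc (ps0_pow d (PS i (PZ 0))) = ps0_pow d (PZ i)"
  and postgt_ps0_pow_PS [simp]: "postgt (ps0_pow d (PS i (PZ 0))) = ps0_pow d (PZ (Suc i))"
  using possrc_postgt_ps0_pow[of "PS i (PZ 0)" d] by simp_all

lemma tdim_disk [simp]: "tdim (disk n) = n"
  by (induction n) (auto simp: tdim_singleton)

lemma tdim_comptree [simp]: "tdim (comptree n) = Suc n"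
  by (induction n) (auto simp: tdim_singleton tdim.simps)

lemma poss_singleton_iff: "p \<in> poss (Node [C]) \<longleftrightarrow> p = PZ 0 \<or> p = PZ 1 \<or> (\<exists>q. p = PS 0 q \<and> q \<in> poss C)"
  by (auto simp: poss_def ispos_Node_iff)

lemma ex_ps0_pow_Suc_iff:
  "(\<exists>d j. p = ps0_pow d (PZ j) \<and> (d < Suc n \<and> j \<le> 1 \<or> d = Suc n \<and> Q j)) \<longleftrightarrow>
   p = PZ 0 \<or> p = PZ 1 \<or> (\<exists>q. p = PS 0 q \<and> (\<exists>d j. q = ps0_pow d (PZ j) \<and> (d < n \<and> j \<le> 1 \<or> d = n \<and> Q j)))"
proof
  assume "\<exists>d j. p = ps0_pow d (PZ j) \<and> (d < Suc n \<and> j \<le> 1 \<or> d = Suc n \<and> Q j)"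
  then obtain d j where "p = ps0_pow d (PZ j)" "d < Suc n \<and> j \<le> 1 \<or> d = Suc n \<and> Q j" by blast
  then show "p = PZ 0 \<or> p = PZ 1 \<or> (\<exists>q. p = PS 0 q \<and> (\<exists>d j. q = ps0_pow d (PZ j) \<and> (d < n \<and> j \<le> 1 \<or> d = n \<and> Q j)))"
    by (cases d) (auto simp: ps0_pow_Suc le_Suc_eq)
next
  assume "p = PZ 0 \<or> p = PZ 1 \<or> (\<exists>q. p = PS 0 q \<and> (\<exists>d j. q = ps0_pow d (PZ j) \<and> (d < n \<and> j \<le> 1 \<or> d = n \<and> Q j)))"
  then show "\<exists>d j. p = ps0_pow d (PZ j) \<and> (d < Suc n \<and> j \<le> 1 \<or> d = Suc n \<and> Q j)"
  proof (elim disjE)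
    assume "p = PZ 0"
    then show ?thesis by (intro exI[of _ 0] exI[of _ 0]) simp
  next
    assume "p = PZ 1"
    then show ?thesis by (intro exI[of _ 0] exI[of _ 1]) simp
  next
    assume "\<exists>q. p = PS 0 q \<and> (\<exists>d j. q = ps0_pow d (PZ j) \<and> (d < n \<and> j \<le> 1 \<or> d = n \<and> Q j))"
    then obtain d j where "p = ps0_pow (Suc d) (PZ j)" "d < n \<and> j \<le> 1 \<or> d = n \<and> Q j"
      by (auto simp: ps0_pow_Suc)
    then show ?thesis by auto
  qed
qed

lemma poss_disk: "p \<in> poss (disk n) \<longleftrightarrow> (\<exists>d j. p = ps0_pow d (PZ j) \<and> (d < n \<and> j \<le> 1 \<or> d = n \<and> j = 0))"
proof (induction n arbitrary: p)
  case 0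
  show ?case by (auto simp: poss_def ispos_Node_iff)
next
  case (Suc n)
  show ?case by (simp only: disk.simps poss_singleton_iff Suc.IH ex_ps0_pow_Suc_iff)
qed

lemma poss_comptree: "p \<in> poss (comptree n) \<longleftrightarrow> (\<exists>i\<le>1. p = ps0_pow n (PS i (PZ 0))) \<or>
   (\<exists>d j. p = ps0_pow d (PZ j) \<and> (d < n \<and> j \<le> 1 \<or> d = n \<and> j \<le> 2))"
proof (induction n arbitrary: p)
  case 0
  show ?case by (auto simp: poss_def ispos_Node_iff less_Suc_eq nth_Cons' le_Suc_eq)
next
  case (Suc n)
  have "(\<exists>i\<le>1. p = ps0_pow (Suc n) (PS i (PZ 0))) \<longleftrightarrow> (\<exists>q. p = PS 0 q \<and> (\<exists>i\<le>1. q = ps0_pow n (PS i (PZ 0))))"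
    by (auto simp: ps0_pow_Suc)
  then show ?case
    by (simp only: comptree.simps poss_singleton_iff Suc.IH ex_ps0_pow_Suc_iff) blast
qed

lemma disk_posE:
  assumes "p \<in> poss (disk n)"
  obtains d j where "p = ps0_pow d (PZ j)" "d < n \<and> j \<le> 1 \<or> d = n \<and> j = 0"
  using assms unfolding poss_disk by blast

lemma comptree_posE:
  assumes "p \<in> poss (comptree n)"
  obtains (top) i where "i \<le> 1" "p = ps0_pow n (PS i (PZ 0))"
    | (globe) d j where "p = ps0_pow d (PZ j)" "d < n \<and> j \<le> 1 \<or> d = n \<and> j \<le> 2"
  using assms unfolding poss_comptree by blast

lemma top_in_poss_disk: "top n \<in> poss (disk n)"
  by (auto simp: poss_disk top_eq_ps0_pow)

lemma PVar_ps0_pow_in_pbdries: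
  "d < k \<and> j \<le> 1 \<or> d = k \<and> j = j0 \<Longrightarrow> PVar (ps0_pow d (PZ j)) \<in> pbdries k (PVar (ps0_pow k (PZ j0)))"
proof (induction k arbitrary: j0)
  case (Suc k)
  have "pbdries (Suc k) (PVar (ps0_pow (Suc k) (PZ j0))) =
    {PVar (ps0_pow (Suc k) (PZ j0))} \<union> pbdries k (PVar (ps0_pow k (PZ 0))) \<union> pbdries k (PVar (ps0_pow k (PZ 1)))"
    by simp
  with Suc.prems Suc.IH[of 0] Suc.IH[of 1] show ?case
    by (auto simp: less_Suc_eq le_Suc_eq)
qed simp

lemma covers_disk_top: "covers (disk n) n (PVar (top n))"
  unfolding covers_def
proof
  fix p assume "p \<in> poss (disk n)"
  then obtain d j where "p = ps0_pow d (PZ j)" "d < n \<and> j \<le> 1 \<or> d = n \<and> j = 0"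
    by (auto simp: poss_disk)
  then have "PVar p \<in> pbdries n (PVar (top n))"
    unfolding top_eq_ps0_pow by (auto intro: PVar_ps0_pow_in_pbdries)
  then show "p \<in> \<Union> (occ ` pbdries n (PVar (top n)))" by force
qed

lemma full_sphere_disk: "full_sphere (disk n) (Suc n) (Some (PVar (top n), PVar (top n)))"
  using top_in_poss_disk covers_disk_top by (simp add: full_sphere_Suc_iff wfp_PVar_iff top_eq_ps0_pow)

lemma bdry_comptree: "bdry n (comptree n) = disk n"
  by (induction n) auto

lemma ssrc_ttgt_comptree_top:
  "ssrc n (comptree n) (top n) = ps0_pow n (PZ 0) \<and> ttgt n (comptree n) (top n) = ps0_pow n (PZ 2)"
  by (induction n) (auto simp: ps0_pow_Suc)

lemma full_sphere_comptree:
  "full_sphere (comptree n) (Suc n)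
     (Some (PVar (ssrc n (comptree n) (top n)), PVar (ttgt n (comptree n) (top n))))"
proof -
  have "wfp (comptree n) n (PVar (ps0_pow n (PZ j)))" if "j \<le> 2" for j
    using that by (auto simp: wfp_PVar_iff poss_comptree)
  moreover have "psrc (PVar (ps0_pow n (PZ 0))) = psrc (PVar (ps0_pow n (PZ 2))) \<and>
                 ptgt (PVar (ps0_pow n (PZ 0))) = ptgt (PVar (ps0_pow n (PZ 2)))" if "0 < n"
    using that by (cases n) auto
  moreover have "wfp (disk n) n (PVar (top n))"
    using top_in_poss_disk by (simp add: wfp_PVar_iff top_eq_ps0_pow)
  ultimately show ?thesis
    by (intro full_sphere_SucI[where u' = "PVar (top n)" and v' = "PVar (top n)"])
      (simp_all add: bdry_comptree covers_disk_top pmap_def ssrc_ttgt_comptree_top)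
qed

text \<open>The composite and the identity formed inside T Pos(B): their substitutions follow
  compmap and diskmap, with iterated boundaries of terms in place of those of cells.\<close>
definition iter_bdry :: "nat \<Rightarrow> ptm \<Rightarrow> pos \<Rightarrow> ptm" where
  "iter_bdry n a p =
     (if last (pinds p) = 0 then (psrc ^^ (n - posdim p)) a else (ptgt ^^ (n - posdim p)) a)"

definition comp_args :: "nat \<Rightarrow> ptm \<Rightarrow> ptm \<Rightarrow> pos \<Rightarrow> ptm" where
  "comp_args n x y p =
     (if posdim p = Suc n then (if pinds p ! n = 0 then x else y)
      else if posdim p = n \<and> last (pinds p) = 2 then ptgt y
      else iter_bdry (Suc n) x p)"

definition pcomp :: "nat \<Rightarrow> ptm \<Rightarrow> ptm \<Rightarrow> ptm" where
  "pcomp n x y = PCoh (comptree n)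
     (Some (PVar (ssrc n (comptree n) (top n)), PVar (ttgt n (comptree n) (top n))))
     (on_poss (comptree n) (comp_args n x y))"

definition pidc :: "nat \<Rightarrow> ptm \<Rightarrow> ptm" where
  "pidc n a = PCoh (disk n) (Some (PVar (top n), PVar (top n))) (on_poss (disk n) (iter_bdry n a))"

lemma iter_bdry_ps0_pow [simp]:
  "iter_bdry n a (ps0_pow d (PZ j)) = (if j = 0 then (psrc ^^ (n - d)) a else (ptgt ^^ (n - d)) a)"
  by (simp add: iter_bdry_def)

lemma comp_args_top [simp]: "comp_args n x y (ps0_pow n (PS i (PZ 0))) = (if i = 0 then x else y)"
  by (simp add: comp_args_def nth_append)

lemma comp_args_ps0_pow [simp]:
  "d \<le> n \<Longrightarrow> comp_args n x y (ps0_pow d (PZ j)) =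
     (if d = n \<and> j = 2 then ptgt y else iter_bdry (Suc n) x (ps0_pow d (PZ j)))"
  unfolding comp_args_def by (simp only: posdim_ps0_pow pinds_ps0_pow) simp

lemma wfp_iter_bdry: "wfp B n a \<Longrightarrow> d \<le> n \<Longrightarrow> wfp B d (iter_bdry n a (ps0_pow d (PZ j)))"
  using wfp_funpow_psrc_ptgt[of B n a "n - d"] by simp

lemma psrc_ptgt_iter_bdry:
  assumes "wfp B n a" "Suc d \<le> n"
  shows "psrc (iter_bdry n a (ps0_pow (Suc d) (PZ j))) = iter_bdry n a (ps0_pow d (PZ 0)) \<and>
         ptgt (iter_bdry n a (ps0_pow (Suc d) (PZ j))) = iter_bdry n a (ps0_pow d (PZ 1))"
proof -
  have "n - d = Suc (n - Suc d)" "n - Suc d < n" using assms(2) by auto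
  with wfp_funpow_globular[OF assms(1), of "n - Suc d"] show ?thesis by auto
qed

lemma pglob_comp_args:
  assumes x: "wfp B (Suc n) x" and y: "wfp B (Suc n) y" and xy: "ptgt x = psrc y"
  shows "pglob (wfp B) psrc ptgt (comptree n) (on_poss (comptree n) (comp_args n x y))"
proof (rule pglob_on_possI)
  fix p assume "p \<in> poss (comptree n)"
  then show "wfp B (posdim p) (comp_args n x y p)"
  proof (cases rule: comptree_posE)
    case (globe d j)
    with wfp_iter_bdry[OF x, of d j] wfp_psrc_ptgt[OF y] show ?thesis
      by (auto simp del: iter_bdry_ps0_pow)
  qed (use x y in auto)
next
  fix p assume "p \<in> poss (comptree n)" "0 < posdim p"
  then show "psrc (comp_args n x y p) = comp_args n x y (possrc p) \<and>
             ptgt (comp_args n x y p) = comp_args n x y (postgt p)"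
  proof (cases rule: comptree_posE)
    case (top i)
    with xy show ?thesis by (cases i) auto
  next
    case (globe d j)
    with \<open>0 < posdim p\<close> obtain d' where d: "d = Suc d'" by (cases d) auto
    show ?thesis
    proof (cases "d = n \<and> j = 2")
      case True
      with d have "psrc (ptgt y) = psrc (psrc x) \<and> ptgt (ptgt y) = ptgt (ptgt x)"
        using wfp_globular[of B d' x] wfp_globular[of B d' y] x y xy by auto
      moreover from True d have "n = Suc d'" by simp
      ultimately show ?thesis using True globe by (simp add: numeral_2_eq_2)
    next
      case False
      with globe d psrc_ptgt_iter_bdry[OF x, of d' j] show ?thesis by auto
    qed
  qed
qed

lemma pglob_iter_bdry_disk:
  assumes a: "wfp B n a"
  shows "pglob (wfp B) psrc ptgt (disk n) (on_poss (disk n) (iter_bdry n a))"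
proof (rule pglob_on_possI)
  fix p assume "p \<in> poss (disk n)"
  then show "wfp B (posdim p) (iter_bdry n a p)"
    by (cases rule: disk_posE) (use wfp_iter_bdry[OF a] in \<open>auto simp del: iter_bdry_ps0_pow\<close>)
next
  fix p assume "p \<in> poss (disk n)" "0 < posdim p"
  then show "psrc (iter_bdry n a p) = iter_bdry n a (possrc p) \<and> ptgt (iter_bdry n a p) = iter_bdry n a (postgt p)"
  proof (cases rule: disk_posE)
    case (1 d j)
    with \<open>0 < posdim p\<close> obtain d' where "d = Suc d'" by (cases d) auto
    moreover from 1 this have "Suc d' \<le> n" by auto
    ultimately show ?thesis using 1 psrc_ptgt_iter_bdry[OF a, of d' j] by (simp del: iter_bdry_ps0_pow)
  qed
qed

lemma wfp_pcomp: "wfp B (Suc n) x \<Longrightarrow> wfp B (Suc n) y \<Longrightarrow> ptgt x = psrc y \<Longrightarrow> wfp B (Suc n) (pcomp n x y)"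
  unfolding pcomp_def wfp_PCoh_iff using full_sphere_comptree pglob_comp_args by simp

lemma psrc_ptgt_pcomp: "psrc (pcomp n x y) = psrc x \<and> ptgt (pcomp n x y) = ptgt y"
proof -
  have "ps0_pow n (PZ 0) \<in> poss (comptree n)" "ps0_pow n (PZ 2) \<in> poss (comptree n)"
    by (auto simp: poss_comptree)
  then show ?thesis by (simp add: pcomp_def ssrc_ttgt_comptree_top on_poss_def)
qed

lemma occ_subset_occ_pcomp: "occ x \<subseteq> occ (pcomp n x y)"
proof -
  have "ps0_pow n (PS 0 (PZ 0)) \<in> poss (comptree n)" by (auto simp: poss_comptree)
  then show ?thesis by (force simp: pcomp_def on_poss_def)
qed

lemma wfp_pidc: "wfp B n a \<Longrightarrow> wfp B (Suc n) (pidc n a)"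
  unfolding pidc_def wfp_PCoh_iff using full_sphere_disk pglob_iter_bdry_disk by simp

lemma psrc_ptgt_pidc: "psrc (pidc n a) = a \<and> ptgt (pidc n a) = a"
  using top_in_poss_disk by (simp add: pidc_def on_poss_def top_eq_ps0_pow)

lemma alpha_psub_iter_bdry:
  assumes "walg X \<alpha>" "pglob (wf X) (tsrc X) (ttgt_tm X) B G" "wfp B n a" "d \<le> n"
  shows "\<alpha> (psub (iter_bdry n a (ps0_pow d (PZ j))) G) =
    (if j = 0 then (src X ^^ (n - d)) (\<alpha> (psub a G)) else (tgt X ^^ (n - d)) (\<alpha> (psub a G)))"
  using alpha_psub_funpow[OF assms(1-3), of "n - d"] by simp

lemma alpha_psub_pcomp:
  assumes alg: "walg X \<alpha>" and G: "pglob (wf X) (tsrc X) (ttgt_tm X) B G"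
    and x: "wfp B (Suc n) x" and y: "wfp B (Suc n) y" and xy: "ptgt x = psrc y"
  shows "\<alpha> (psub (pcomp n x y) G) = comp X \<alpha> n (\<alpha> (psub x G)) (\<alpha> (psub y G))"
proof -
  let ?S = "Some (PVar (ssrc n (comptree n) (top n)), PVar (ttgt n (comptree n) (top n)))"
  have args: "\<alpha> (psub (comp_args n x y p) G) = compmap X n (\<alpha> (psub x G)) (\<alpha> (psub y G)) p"
    if "p \<in> poss (comptree n)" for p
    using that
  proof (cases rule: comptree_posE)
    case (top i)
    then show ?thesis by (simp add: compmap_def Let_def nth_append)
  next
    case (globe d j)
    with alpha_psub_iter_bdry[OF alg G x, of d j] alpha_psub_psrc_ptgt[OF alg G y] show ?thesis
      by (auto simp: compmap_def Let_def simp del: iter_bdry_ps0_pow)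
  qed
  have "\<alpha> (psub (pcomp n x y) G) =
    \<alpha> (Coh (comptree n) ?S (on_poss (comptree n) (\<lambda>p. Var (\<alpha> (psub (comp_args n x y p) G)))))"
    unfolding pcomp_def
    by (rule alpha_psub_PCoh[OF alg G _ full_sphere_comptree pglob_comp_args[OF x y xy]]) simp
  also have "on_poss (comptree n) (\<lambda>p. Var (\<alpha> (psub (comp_args n x y p) G))) =
    on_poss (comptree n) (Var \<circ> compmap X n (\<alpha> (psub x G)) (\<alpha> (psub y G)))"
    by (rule on_poss_cong) (simp add: args)
  finally show ?thesis by (simp add: comp_def cohX_eq_alpha_Coh)
qed

lemma alpha_psub_pidc:
  assumes alg: "walg X \<alpha>" and G: "pglob (wf X) (tsrc X) (ttgt_tm X) B G" and a: "wfp B n a"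
  shows "\<alpha> (psub (pidc n a) G) = idc X \<alpha> n (\<alpha> (psub a G))"
proof -
  let ?S = "Some (PVar (top n), PVar (top n))"
  have args: "\<alpha> (psub (iter_bdry n a p) G) = diskmap X n (\<alpha> (psub a G)) p" if "p \<in> poss (disk n)" for p
    using that
  proof (cases rule: disk_posE)
    case (1 d j)
    with alpha_psub_iter_bdry[OF alg G a, of d j] show ?thesis
      by (auto simp: diskmap_def Let_def simp del: iter_bdry_ps0_pow)
  qed
  have "\<alpha> (psub (pidc n a) G) =
    \<alpha> (Coh (disk n) ?S (on_poss (disk n) (\<lambda>p. Var (\<alpha> (psub (iter_bdry n a p) G)))))"
    unfolding pidc_def
    by (rule alpha_psub_PCoh[OF alg G _ full_sphere_disk pglob_iter_bdry_disk[OF a]]) simp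
  also have "on_poss (disk n) (\<lambda>p. Var (\<alpha> (psub (iter_bdry n a p) G))) =
    on_poss (disk n) (Var \<circ> diskmap X n (\<alpha> (psub a G)))"
    by (rule on_poss_cong) (simp add: args)
  finally show ?thesis by (simp add: idc_def cohX_eq_alpha_Coh)
qed

section \<open>Invertibility of coherence cells\<close>

text \<open>The witness is the sphere (coh(B,(a,b),id) *_n coh(B,(b,a),id), id(a)) of T Pos(B).\<close>
lemma cohX_unit:
  assumes alg: "walg X \<alpha>" and f: "gmap (posG B) X f" and B: "tdim B \<le> n"
    and ab: "full_sphere B (Suc n) (Some (a, b))"
  shows "\<exists>A'. full_sphere B (Suc (Suc n)) A' \<and>
    src X (cohX \<alpha> B A' f) = comp X \<alpha> n (cohX \<alpha> B (Some (a, b)) f) (cohX \<alpha> B (Some (b, a)) f) \<and>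
    tgt X (cohX \<alpha> B A' f) = idc X \<alpha> n (src X (cohX \<alpha> B (Some (a, b)) f))"
proof -
  let ?G = "on_poss B (Var \<circ> f)"
  note G = pglob_on_poss_Var[OF f]
  have ba: "full_sphere B (Suc n) (Some (b, a))" using full_sphere_swap[OF B ab] .
  from ab have a: "wfp B n a" "covers B n a" and b: "wfp B n b"
    by (simp_all add: full_sphere_Suc_iff[OF B])
  define x where "x = pcoh B (Some (a, b))"
  define y where "y = pcoh B (Some (b, a))"
  have x: "wfp B (Suc n) x" "psrc x = a" "ptgt x = b"
    using wfp_pcoh[OF _ ab] psrc_ptgt_pcoh[OF a(1) b] B by (simp_all add: x_def)
  have y: "wfp B (Suc n) y" "psrc y = b" "ptgt y = a"
    using wfp_pcoh[OF _ ba] psrc_ptgt_pcoh[OF b a(1)] B by (simp_all add: y_def)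
  define w where "w = pcomp n x y"
  define i where "i = pidc n a"
  have w: "wfp B (Suc n) w" "psrc w = a" "ptgt w = a"
    using wfp_pcomp[OF x(1) y(1)] psrc_ptgt_pcomp[of n x y] x y by (simp_all add: w_def)
  have i: "wfp B (Suc n) i" "psrc i = a" "ptgt i = a"
    using wfp_pidc[OF a(1)] psrc_ptgt_pidc[of n a] by (simp_all add: i_def)
  have "poss B \<subseteq> occ w"
    using poss_subset_occ_pcoh occ_subset_occ_pcomp unfolding w_def x_def by blast
  then have "covers B (Suc n) w" by (rule covers_if_poss_subset_occ)
  moreover have "covers B (Suc n) i"
    using a(2) i(2) by (simp add: covers_Suc_if_covers_psrc)
  ultimately have wi: "full_sphere B (Suc (Suc n)) (Some (w, i))"
    using w i B by (simp add: full_sphere_Suc_iff)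
  have "src X (cohX \<alpha> B (Some (w, i)) f) = \<alpha> (psub w ?G)" "tgt X (cohX \<alpha> B (Some (w, i)) f) = \<alpha> (psub i ?G)"
    using src_tgt_cohX[OF alg f _ wi] B by simp_all
  moreover have "\<alpha> (psub w ?G) = comp X \<alpha> n (cohX \<alpha> B (Some (a, b)) f) (cohX \<alpha> B (Some (b, a)) f)"
    using alpha_psub_pcomp[OF alg G x(1) y(1)] x y by (simp add: w_def x_def y_def cohX_eq_alpha_psub_pcoh)
  moreover have "\<alpha> (psub i ?G) = idc X \<alpha> n (src X (cohX \<alpha> B (Some (a, b)) f))"
    using alpha_psub_pidc[OF alg G a(1)] src_tgt_cohX[OF alg f _ ab] B by (simp add: i_def)
  ultimately show ?thesis using wi by auto
qed

definition coh_cell :: "'a gset \<Rightarrow> ('a tm \<Rightarrow> 'a) \<Rightarrow> 'a \<Rightarrow> bool" where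
  "coh_cell X \<alpha> z \<longleftrightarrow> (\<exists>B A N f. z = cohX \<alpha> B A f \<and> full_sphere B N A \<and> tdim B < N \<and> gmap (posG B) X f)"

lemma coh_cell_inverse:
  assumes alg: "walg X \<alpha>" and "coh_cell X \<alpha> z"
  obtains n zb \<eta> \<epsilon> where "z \<in> cells X (Suc n)" "zb \<in> cells X (Suc n)" "src X zb = tgt X z" "tgt X zb = src X z"
    "\<eta> \<in> cells X (Suc (Suc n))" "\<epsilon> \<in> cells X (Suc (Suc n))"
    "src X \<eta> = comp X \<alpha> n z zb" "tgt X \<eta> = idc X \<alpha> n (src X z)"
    "src X \<epsilon> = comp X \<alpha> n zb z" "tgt X \<epsilon> = idc X \<alpha> n (tgt X z)"
    "coh_cell X \<alpha> \<eta>" "coh_cell X \<alpha> \<epsilon>"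
proof -
  from \<open>coh_cell X \<alpha> z\<close> obtain B A N f where z: "z = cohX \<alpha> B A f" and A: "full_sphere B N A"
    and "tdim B < N" and f: "gmap (posG B) X f"
    unfolding coh_cell_def by blast
  then obtain n where N: "N = Suc n" and B: "tdim B \<le> n" by (cases N) auto
  from A N obtain a b where "A = Some (a, b)" by (auto elim: full_sphere_SucE)
  with A N z have ab: "full_sphere B (Suc n) (Some (a, b))" and z: "z = cohX \<alpha> B (Some (a, b)) f" by simp_all
  note ba = full_sphere_swap[OF B ab]
  define zb where "zb = cohX \<alpha> B (Some (b, a)) f"
  obtain \<eta> where \<eta>: "full_sphere B (Suc (Suc n)) \<eta>"
    "src X (cohX \<alpha> B \<eta> f) = comp X \<alpha> n z zb" "tgt X (cohX \<alpha> B \<eta> f) = idc X \<alpha> n (src X z)"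
    using cohX_unit[OF alg f B ab] unfolding z zb_def by blast
  obtain \<epsilon> where \<epsilon>: "full_sphere B (Suc (Suc n)) \<epsilon>"
    "src X (cohX \<alpha> B \<epsilon> f) = comp X \<alpha> n zb z" "tgt X (cohX \<alpha> B \<epsilon> f) = idc X \<alpha> n (src X zb)"
    using cohX_unit[OF alg f B ba] unfolding z zb_def by blast
  have bd: "src X zb = tgt X z" "tgt X zb = src X z"
    using src_tgt_cohX[OF alg f B ab] src_tgt_cohX[OF alg f B ba] by (simp_all add: z zb_def)
  have cells: "z \<in> cells X (Suc n)" "zb \<in> cells X (Suc n)"
    "cohX \<alpha> B \<eta> f \<in> cells X (Suc (Suc n))" "cohX \<alpha> B \<epsilon> f \<in> cells X (Suc (Suc n))"
    using cohX_in_cells[OF alg f] ab ba \<eta>(1) \<epsilon>(1) B by (simp_all add: z zb_def)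
  have coh: "coh_cell X \<alpha> (cohX \<alpha> B E f)" if "full_sphere B (Suc (Suc n)) E" for E
    unfolding coh_cell_def using that f B
    by (intro exI[of _ B] exI[of _ E] exI[of _ "Suc (Suc n)"] exI[of _ f]) simp
  from \<epsilon>(3) bd(1) have "tgt X (cohX \<alpha> B \<epsilon> f) = idc X \<alpha> n (tgt X z)" by simp
  then show thesis
    by (rule that[OF cells(1,2) bd cells(3,4) \<eta>(2,3) \<epsilon>(2) _ coh[OF \<eta>(1)] coh[OF \<epsilon>(1)]])
qed

theorem proposition3p4:
  fixes B :: tree and n :: nat and A :: "(ptm \<times> ptm) option"
    and X :: "'a gset" and \<alpha> :: "'a tm \<Rightarrow> 'a" and f :: "pos \<Rightarrow> 'a"
  assumes "full_sphere B n A"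
    and "tdim B < n"
    and "walg X \<alpha>"
    and "gmap (posG B) X f"
  shows "invertible X \<alpha> (cohX \<alpha> B A f)"
proof (rule invertible.coinduct[of "coh_cell X \<alpha>"], goal_cases)
  case 1
  show ?case using assms(1,2,4) unfolding coh_cell_def by blast
next
  case (2 z)
  with assms(3) show ?case
    by (rule coh_cell_inverse) (intro exI conjI disjI1; (rule refl | assumption))
qed

end
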